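(* Let $f:\mathbb{R}^2\to\mathbb{R}^2$ be a homeomorphism and let $x\in\mathbb{R}^2$ satisfy $\omega(x)=\emptyset$. Then there exists a continuous positive map $\epsilon:\mathbb{R}^2\to\mathbb{R}$ such that for every $y\neq x$ there exists $n>0$ with $\|f^n(x)-f^n(y)\|>\epsilon(f^n(x))$. In particular, if $(x_n)_{n\in\mathbb{Z}}$ is a pseudo-orbit with $x_n=f^n(x)$ for all $n\geq n_0$ (some $n_0$), then the only orbit that can $\epsilon$-shadow $(x_n)_{n\in\mathbb{Z}}$ is the orbit of $x$.
   Context: $\omega(x)$ is the $\omega$-limit set of $x$ under $f$. For a continuous positive $\delta$, a $\delta$-pseudo-orbit is a sequence $(x_n)_{n\in\mathbb{Z}}$ with $\|f(x_n)-x_{n+1}\|<\delta(f(x_n))$ for all $n$; it is $\epsilon$-shadowed by the orbit of a point $w$ if $\|x_n-f^n(w)\|<\epsilon(x_n)$ for all $n\in\mathbb{Z}$. *)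

theory Defs
  imports "HOL-Analysis.Analysis"
begin

definition omega_limit :: "('a::topological_space \<Rightarrow> 'a) \<Rightarrow> 'a \<Rightarrow> 'a set" where
  "omega_limit f x = {y. \<exists>r. strict_mono r \<and> ((\<lambda>k. (f ^^ r k) x) \<longlonglongrightarrow> y)}"

definition zpow :: "('a \<Rightarrow> 'a) \<Rightarrow> int \<Rightarrow> 'a \<Rightarrow> 'a" where
  "zpow f n = (if 0 \<le> n then f ^^ nat n else inv f ^^ nat (- n))"

definition pseudo_orbit :: "('a::real_normed_vector \<Rightarrow> 'a) \<Rightarrow> ('a \<Rightarrow> real) \<Rightarrow> (int \<Rightarrow> 'a) \<Rightarrow> bool" where
  "pseudo_orbit f \<delta> xs \<longleftrightarrow> (\<forall>n. norm (f (xs n) - xs (n + 1)) < \<delta> (f (xs n)))"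

definition shadows :: "('a::real_normed_vector \<Rightarrow> 'a) \<Rightarrow> ('a \<Rightarrow> real) \<Rightarrow> (int \<Rightarrow> 'a) \<Rightarrow> 'a \<Rightarrow> bool" where
  "shadows f \<epsilon> xs w \<longleftrightarrow> (\<forall>n. norm (xs n - zpow f n w) < \<epsilon> (xs n))"

end

theory Submission
  imports Defs
begin

text \<open>
  Continuity of the inverse iterates \<open>f\<^sup>-\<^sup>n\<close> at \<open>f\<^sup>n x\<close> gives radii \<open>e\<^sub>n > 0\<close> such that
  every \<open>y\<close> with \<open>|f\<^sup>n y - f\<^sup>n x| \<le> e\<^sub>n\<close> lies within \<open>1/(n+1)\<close> of \<open>x\<close>; so a point that stays
  \<open>e\<^sub>n\<close>-close to the orbit of \<open>x\<close> for all large \<open>n\<close> is \<open>x\<close> itself. It remains to find a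
  continuous positive \<open>\<epsilon>\<close> with \<open>\<epsilon>(f\<^sup>n x) \<le> e\<^sub>n\<close>: take the lower envelope of the cones
  \<open>z \<mapsto> e\<^sub>n + |z - f\<^sup>n x|\<close>. It is 1-Lipschitz, and it is positive because
  \<open>\<omega>(x) = \<emptyset>\<close> forces the orbit of \<open>x\<close> to visit every bounded set only finitely often.
\<close>

lemma continuous_on_funpow:
  fixes g :: "'a::topological_space \<Rightarrow> 'a"
  assumes "continuous_on UNIV g"
  shows "continuous_on UNIV (g ^^ n)"
proof (induction n)
  case (Suc n)
  then show ?case
    using continuous_on_compose2[OF assms Suc] by simp
qed simp

lemma funpow_left_inverse:
  fixes f g :: "'a \<Rightarrow> 'a"
  assumes "\<And>y. g (f y) = y"
  shows "(g ^^ n) ((f ^^ n) y) = y"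
  by (induction n arbitrary: y) (simp_all add: assms funpow_swap1)

lemma orbit_separating_radii:
  fixes f g :: "'a::metric_space \<Rightarrow> 'a"
  assumes cont: "continuous_on UNIV g" and left_inverse: "\<And>y. g (f y) = y"
  obtains e where "\<And>n. 0 < e n"
    and "\<And>y. eventually (\<lambda>n. dist ((f ^^ n) y) ((f ^^ n) x) \<le> e n) sequentially \<Longrightarrow> y = x"
proof -
  have "\<exists>d>0. \<forall>z. dist z ((f ^^ n) x) \<le> d \<longrightarrow> dist ((g ^^ n) z) x < inverse (Suc n)" for n
  proof -
    obtain d where "d > 0"
      and d: "\<forall>z. dist z ((f ^^ n) x) < d \<longrightarrow>
                  dist ((g ^^ n) z) ((g ^^ n) ((f ^^ n) x)) < inverse (Suc n)"
      using continuous_on_funpow[OF cont, of n] unfolding continuous_on_iff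
      by (metis UNIV_I inverse_positive_iff_positive of_nat_0_less_iff zero_less_Suc)
    then show ?thesis
      by (intro exI[of _ "d / 2"]) (auto simp: funpow_left_inverse[of g f, OF left_inverse])
  qed
  then obtain e where e_pos: "\<And>n. 0 < e n"
    and e: "\<And>n z. dist z ((f ^^ n) x) \<le> e n \<Longrightarrow> dist ((g ^^ n) z) x < inverse (Suc n)"
    by metis
  have "y = x" if "eventually (\<lambda>n. dist ((f ^^ n) y) ((f ^^ n) x) \<le> e n) sequentially" for y
  proof -
    have "eventually (\<lambda>n. dist y x \<le> inverse (Suc n)) sequentially"
      using that by eventually_elim
        (metis e funpow_left_inverse[of g f, OF left_inverse] less_imp_le)
    then have "dist y x \<le> 0"
      using tendsto_le[OF trivial_limit_sequentially LIMSEQ_inverse_real_of_nat tendsto_const]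
      by blast
    then show ?thesis by simp
  qed
  with e_pos that show ?thesis by blast
qed

lemma omega_limit_empty_imp_finite_visits:
  fixes f :: "'a::heine_borel \<Rightarrow> 'a"
  assumes "omega_limit f x = {}" and "bounded S"
  shows "finite {n. (f ^^ n) x \<in> S}"
proof (rule ccontr)
  let ?visits = "{n. (f ^^ n) x \<in> S}"
  assume "infinite ?visits"
  then have "strict_mono (enumerate ?visits)" and "range (\<lambda>k. (f ^^ enumerate ?visits k) x) \<subseteq> S"
    using strict_mono_enumerate enumerate_in_set by blast+
  moreover obtain l r where "strict_mono r" and "((\<lambda>k. (f ^^ enumerate ?visits k) x) \<circ> r) \<longlonglongrightarrow> l"
    using bounded_imp_convergent_subsequence bounded_subset[OF \<open>bounded S\<close> calculation(2)] by blast
  ultimately have "l \<in> omega_limit f x"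
    unfolding omega_limit_def by (auto intro!: exI[of _ "enumerate ?visits \<circ> r"] strict_mono_o simp: comp_def)
  with assms show False by simp
qed

definition cone_envelope :: "(nat \<Rightarrow> real) \<Rightarrow> (nat \<Rightarrow> 'a::metric_space) \<Rightarrow> 'a \<Rightarrow> real" where
  "cone_envelope e X z = (INF n. e n + dist z (X n))"

context
  fixes e :: "nat \<Rightarrow> real" and X :: "nat \<Rightarrow> 'a::metric_space"
  assumes e_nonneg: "\<And>n. 0 \<le> e n"
begin

lemma bdd_below_cones: "bdd_below (range (\<lambda>n. e n + dist z (X n)))"
  by (rule bdd_belowI[of _ 0]) (auto intro: add_nonneg_nonneg e_nonneg)

lemma cone_envelope_le: "cone_envelope e X z \<le> e n + dist z (X n)"
  unfolding cone_envelope_def by (rule cINF_lower[OF bdd_below_cones]) simp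

lemma cone_envelope_at_apex: "cone_envelope e X (X n) \<le> e n"
  using cone_envelope_le[of "X n" n] by simp

lemma cone_envelope_le_dist: "cone_envelope e X z \<le> cone_envelope e X w + dist z w"
proof -
  have "cone_envelope e X z - dist z w \<le> cone_envelope e X w"
    unfolding cone_envelope_def[of e X w]
  proof (rule cINF_greatest)
    show "cone_envelope e X z - dist z w \<le> e n + dist w (X n)" for n
      using cone_envelope_le[of z n] dist_triangle[of z "X n" w] by (simp add: dist_commute)
  qed simp
  then show ?thesis by simp
qed

lemma lipschitz_cone_envelope: "1-lipschitz_on UNIV (cone_envelope e X)"
proof (rule lipschitz_onI)
  show "dist (cone_envelope e X z) (cone_envelope e X w) \<le> 1 * dist z w" for z w
    using cone_envelope_le_dist[of z w] cone_envelope_le_dist[of w z]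
    by (simp add: dist_real_def dist_commute abs_le_iff)
qed simp

lemma cone_envelope_pos:
  assumes "\<And>n. 0 < e n" and "0 < r" and finite: "finite {n. dist z (X n) < r}"
  shows "0 < cone_envelope e X z"
proof -
  define m where "m = Min (insert r (e ` {n. dist z (X n) < r}))"
  have "0 < m"
    unfolding m_def using finite assms by auto
  also have "m \<le> cone_envelope e X z"
    unfolding cone_envelope_def
  proof (rule cINF_greatest)
    fix n
    show "m \<le> e n + dist z (X n)"
    proof (cases "dist z (X n) < r")
      case True
      then have "m \<le> e n" unfolding m_def using finite by simp
      then show ?thesis using zero_le_dist[of z "X n"] by linarith
    next
      case False
      have "m \<le> r" unfolding m_def using finite by simp
      with False e_nonneg[of n] show ?thesis by linarith
    qed
  qed simp
  finally show ?thesis .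
qed

end

lemma zpow_of_nat [simp]: "zpow f (int n) = f ^^ n"
  by (simp add: zpow_def)

lemma shadows_orbit_tail:
  assumes "\<forall>n::int. n \<ge> n0 \<longrightarrow> xs n = zpow f n x" and "shadows f \<epsilon> xs w"
  shows "eventually (\<lambda>n. norm ((f ^^ n) x - (f ^^ n) w) < \<epsilon> ((f ^^ n) x)) sequentially"
proof (rule eventually_sequentiallyI)
  fix n :: nat assume "nat n0 \<le> n"
  then have "xs (int n) = (f ^^ n) x"
    using assms(1) by simp
  with assms(2) show "norm ((f ^^ n) x - (f ^^ n) w) < \<epsilon> ((f ^^ n) x)"
    unfolding shadows_def by (metis zpow_of_nat)
qed

theorem mainTheorem9:
  fixes f :: "real^2 \<Rightarrow> real^2" and x :: "real^2"
  assumes hom: "\<exists>g. homeomorphism UNIV UNIV f g"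
    and om: "omega_limit f x = {}"
  shows "\<exists>\<epsilon> :: real^2 \<Rightarrow> real. continuous_on UNIV \<epsilon> \<and> (\<forall>z. 0 < \<epsilon> z) \<and>
     (\<forall>y. y \<noteq> x \<longrightarrow> (\<exists>n::nat. n > 0 \<and> norm ((f ^^ n) x - (f ^^ n) y) > \<epsilon> ((f ^^ n) x))) \<and>
     (\<forall>\<delta> xs n0 w. continuous_on UNIV \<delta> \<and> (\<forall>z. 0 < \<delta> z) \<and> pseudo_orbit f \<delta> xs \<and>
        (\<forall>n::int. n \<ge> n0 \<longrightarrow> xs n = zpow f n x) \<and> shadows f \<epsilon> xs w \<longrightarrow> w = x)"
proof -
  obtain g where g: "homeomorphism UNIV UNIV f g" using hom by blast
  obtain e where e_pos: "\<And>n. 0 < e n"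
    and separating: "\<And>y. eventually (\<lambda>n. dist ((f ^^ n) y) ((f ^^ n) x) \<le> e n) sequentially \<Longrightarrow> y = x"
    using orbit_separating_radii homeomorphism_cont2[OF g] homeomorphism_apply1[OF g] by blast
  have e_nonneg: "\<And>n. 0 \<le> e n" using e_pos less_imp_le by blast
  define \<epsilon> where "\<epsilon> = cone_envelope e (\<lambda>n. (f ^^ n) x)"
  have at_orbit: "\<epsilon> ((f ^^ n) x) \<le> e n" for n
    unfolding \<epsilon>_def by (rule cone_envelope_at_apex[of e, OF e_nonneg])
  have shadowed_eq: "y = x"
    if "eventually (\<lambda>n. norm ((f ^^ n) x - (f ^^ n) y) \<le> \<epsilon> ((f ^^ n) x)) sequentially" for y
    using that by (intro separating)
      (auto elim!: eventually_mono intro: order_trans[OF _ at_orbit] simp: dist_norm norm_minus_commute)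
  have "continuous_on UNIV \<epsilon>"
    unfolding \<epsilon>_def by (rule lipschitz_on_continuous_on[OF lipschitz_cone_envelope[of e, OF e_nonneg]])
  moreover have "0 < \<epsilon> z" for z
    unfolding \<epsilon>_def using omega_limit_empty_imp_finite_visits[OF om bounded_ball[of z 1]]
    by (intro cone_envelope_pos[of e, OF e_nonneg e_pos zero_less_one]) (simp add: mem_ball)
  moreover have "\<exists>n>0. norm ((f ^^ n) x - (f ^^ n) y) > \<epsilon> ((f ^^ n) x)" if "y \<noteq> x" for y
  proof (rule ccontr)
    assume "\<not> ?thesis"
    then have "\<forall>n>0. norm ((f ^^ n) x - (f ^^ n) y) \<le> \<epsilon> ((f ^^ n) x)"
      by (metis not_less)
    then have "eventually (\<lambda>n. norm ((f ^^ n) x - (f ^^ n) y) \<le> \<epsilon> ((f ^^ n) x)) sequentially"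
      by (intro eventually_sequentiallyI[of 1]) auto
    with shadowed_eq that show False by blast
  qed
  moreover have "w = x" if "\<forall>n::int. n \<ge> n0 \<longrightarrow> xs n = zpow f n x" and "shadows f \<epsilon> xs w"
    for xs n0 w
    by (rule shadowed_eq, rule eventually_mono[OF shadows_orbit_tail[OF that]]) simp
  ultimately show ?thesis by blast
qed

end
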